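(* Let $0<\alpha<1$, let $F=\ell\circ\lambda_\alpha$ where $\lambda_\alpha$ is the lens map, and let $\varphi$ be a Schwarz-type function. Let $R\in[0,1)$ be defined by $\frac{2R}{1+R^2}=\sin\frac{\alpha\pi}{2}$. Then $T_{F,\varphi}(f)\in\mathcal{P}$ for every $f\in\mathcal{P}$ if and only if $\|\varphi\|_\infty\le\frac{1-R}{1+R}$.
   Context: $\mathbb{D}$ is the open unit disk. $\mathcal{P}$ is the set of analytic $f$ on $\mathbb{D}$ with $\mathrm{Re}\,f>0$ and $f(0)=1$. A Schwarz-type function is an analytic $\varphi:\mathbb{D}\to\mathbb{D}$ with $\varphi(0)=0$. $\ell(z)=\frac{1+z}{1-z}$. For $0<\alpha<1$, the lens map is $\lambda_\alpha=\ell^{-1}\circ\ell^\alpha$, i.e. $\lambda_\alpha(z)=\frac{\ell(z)^\alpha-1}{\ell(z)^\alpha+1}$ (principal power), a conformal map of $\mathbb{D}$ onto a lens-shaped region bounded by two circular arcs symmetric about the real axis meeting at $\pm1$ at angle $\pi\alpha$; thus $F=\ell^\alpha$. $\|\varphi\|_\infty=\sup_{z\in\mathbb{D}}|\varphi(z)|$. $T_{F,\varphi}(f)=F\cdot(f\circ\varphi)$. *)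

theory Defs
  imports "HOL-Complex_Analysis.Complex_Analysis"
begin

definition unit_disk :: "complex set" where
  "unit_disk = ball 0 1"

definition caratheodory_class :: "(complex \<Rightarrow> complex) set" where
  "caratheodory_class = {f. f holomorphic_on unit_disk \<and> (\<forall>z\<in>unit_disk. Re (f z) > 0) \<and> f 0 = 1}"

definition schwarz_type :: "(complex \<Rightarrow> complex) \<Rightarrow> bool" where
  "schwarz_type \<phi> \<longleftrightarrow> \<phi> holomorphic_on unit_disk \<and> \<phi> ` unit_disk \<subseteq> unit_disk \<and> \<phi> 0 = 0"

definition ell :: "complex \<Rightarrow> complex" where
  "ell z = (1 + z) / (1 - z)"

definition lens_map :: "real \<Rightarrow> complex \<Rightarrow> complex" where
  "lens_map \<alpha> z = (ell z powr complex_of_real \<alpha> - 1) / (ell z powr complex_of_real \<alpha> + 1)"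

definition sup_norm :: "(complex \<Rightarrow> complex) \<Rightarrow> real" where
  "sup_norm \<phi> = (SUP z\<in>unit_disk. cmod (\<phi> z))"

definition wcomp :: "(complex \<Rightarrow> complex) \<Rightarrow> (complex \<Rightarrow> complex) \<Rightarrow> (complex \<Rightarrow> complex) \<Rightarrow> (complex \<Rightarrow> complex)" where
  "wcomp F \<phi> f = (\<lambda>z. F z * f (\<phi> z))"

end

theory Submission
  imports Defs
begin

text \<open>Put \<open>w = log ell(z)\<close>, which ranges over the strip \<open>|Im w| < \<pi>/2\<close>; then the weight is
  \<open>F(z) = e\<^bsup>\<alpha>w\<^esup>\<close>, and by Schwarz's lemma every \<open>f \<in> \<P>\<close> satisfies \<open>f(u) = ell(v)\<close> with \<open>|v| \<le> |u|\<close>.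
  So \<open>Re (F(z) f(\<phi>(z)))\<close> has the sign of \<open>(1 - |v|\<^sup>2) cos (\<alpha> Im w) - 2 Im v sin (\<alpha> Im w)\<close>, whose
  minimum over \<open>|v| = s\<close> is the margin \<open>(1 - s\<^sup>2) cos (\<alpha> y) - 2 s |sin (\<alpha> y)|\<close>, \<open>y = Im w\<close>.
  For \<open>s = r = (1 - R)/(1 + R)\<close> the margin vanishes at the edge \<open>y = \<pi>/2\<close> and is positive inside
  the strip, which gives sufficiency. Conversely, testing with rotations of \<open>ell\<close> shows that the
  margin at \<open>s = |\<phi>(z)|\<close> is positive for all \<open>z\<close>. If \<open>|\<phi>(z)| > r\<close>, then \<open>|\<phi>|\<close> is below some
  \<open>r\<^sub>1 < |\<phi>(z)|\<close> on the lines \<open>|Im w| = \<beta>\<close> for \<open>\<beta>\<close> close to \<open>\<pi>/2\<close>, and a Phragmen--Lindelof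
  argument in the strip \<open>|Im w| < \<beta>\<close> carries this bound to \<open>z\<close>, a contradiction.\<close>

definition ell_inv :: "complex \<Rightarrow> complex" where
  "ell_inv w = (w - 1) / (w + 1)"

lemma ell_inv_ell: "z \<noteq> 1 \<Longrightarrow> ell_inv (ell z) = z"
  by (simp add: ell_inv_def ell_def field_simps)

lemma ell_ell_inv: "w \<noteq> -1 \<Longrightarrow> ell (ell_inv w) = w"
  by (simp add: ell_inv_def ell_def field_simps add_eq_0_iff)

lemma norm_ell_inv_less_one:
  assumes "0 < Re w" shows "norm (ell_inv w) < 1"
proof -
  have "(norm (w - 1))\<^sup>2 = (Re w - 1)\<^sup>2 + (Im w)\<^sup>2" "(norm (w + 1))\<^sup>2 = (Re w + 1)\<^sup>2 + (Im w)\<^sup>2"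
    by (simp_all add: cmod_power2)
  with assms have "(norm (w - 1))\<^sup>2 < (norm (w + 1))\<^sup>2"
    by (simp add: power2_eq_square algebra_simps)
  hence "norm (w - 1) < norm (w + 1)"
    by (meson norm_ge_zero power_less_imp_less_base)
  thus ?thesis using assms by (auto simp: ell_inv_def norm_divide divide_less_eq add_eq_0_iff)
qed

lemma Re_mult_ell:
  assumes "v \<noteq> 1"
  shows "Re (p * ell v) = (Re p * (1 - (cmod v)\<^sup>2) - 2 * Im p * Im v) / (cmod (1 - v))\<^sup>2"
proof -
  have "(1 - Re v)\<^sup>2 + (Im v)\<^sup>2 \<noteq> 0"
    using assms by (metis complex_eq_iff one_complex.sel sum_power2_eq_zero_iff right_minus_eq
        zero_complex.sel minus_complex.sel)
  then have "ell v = Complex ((1 - (Re v)\<^sup>2 - (Im v)\<^sup>2) / ((1 - Re v)\<^sup>2 + (Im v)\<^sup>2))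
                        (2 * Im v / ((1 - Re v)\<^sup>2 + (Im v)\<^sup>2))"
    using assms by (simp add: ell_def complex_eq_iff Re_divide Im_divide power2_eq_square field_simps)
  then show ?thesis
    by (simp add: cmod_power2 diff_divide_distrib add_divide_distrib algebra_simps)
qed

lemma Re_ell_pos:
  assumes "z \<in> unit_disk" shows "0 < Re (ell z)"
proof -
  have z: "cmod z < 1" "z \<noteq> 1" using assms by (auto simp: unit_disk_def)
  then have "(cmod z)\<^sup>2 < 1" by (simp add: abs_square_less_1)
  with z show ?thesis using Re_mult_ell[of z 1] by simp
qed

lemma Re_powr_pos:
  assumes "0 < Re w" "0 \<le> \<alpha>" "\<alpha> \<le> 1"
  shows "0 < Re (w powr complex_of_real \<alpha>)"
proof -
  have "\<bar>Im (ln w)\<bar> < pi/2" using Re_Ln_pos_lt_imp[OF assms(1)] .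
  then have "\<bar>\<alpha> * Im (ln w)\<bar> < pi/2"
    using assms(2,3) mult_left_le_one_le[of "\<bar>Im (ln w)\<bar>" \<alpha>] by (simp add: abs_mult)
  moreover have "w \<noteq> 0" using assms(1) by auto
  ultimately show ?thesis by (simp add: powr_def Re_exp cos_gt_zero_pi)
qed

lemma ell_lens_map:
  assumes "z \<in> unit_disk" "0 \<le> \<alpha>" "\<alpha> \<le> 1"
  shows "ell (lens_map \<alpha> z) = ell z powr complex_of_real \<alpha>"
proof -
  have "lens_map \<alpha> z = ell_inv (ell z powr complex_of_real \<alpha>)"
    by (simp add: lens_map_def ell_inv_def)
  moreover have "ell z powr complex_of_real \<alpha> \<noteq> -1"
    using Re_powr_pos[OF Re_ell_pos[OF assms(1)] assms(2,3)] by auto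
  ultimately show ?thesis by (simp add: ell_ell_inv)
qed

lemma holomorphic_ell_powr:
  "(\<lambda>z. ell z powr complex_of_real \<alpha>) holomorphic_on unit_disk"
proof -
  have "ell z \<notin> \<real>\<^sub>\<le>\<^sub>0" if "z \<in> unit_disk" for z
    using Re_ell_pos[OF that] by (auto simp: complex_nonpos_Reals_iff)
  then show ?thesis
    unfolding ell_def unit_disk_def by (intro holomorphic_intros) auto
qed

definition strip_to_disk :: "complex \<Rightarrow> complex" where
  "strip_to_disk w = ell_inv (exp w)"

lemma
  assumes "\<bar>Im w\<bar> < pi/2"
  shows strip_to_disk_in_unit_disk: "strip_to_disk w \<in> unit_disk"
    and ell_strip_to_disk: "ell (strip_to_disk w) = exp w"
proof -
  have "0 < Re (exp w)" using assms by (simp add: Re_exp cos_gt_zero_pi)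
  moreover have "exp w \<noteq> -1" using calculation by auto
  ultimately show "strip_to_disk w \<in> unit_disk" "ell (strip_to_disk w) = exp w"
    by (auto simp: strip_to_disk_def unit_disk_def norm_ell_inv_less_one ell_ell_inv)
qed

lemma strip_to_disk_holomorphic: "strip_to_disk holomorphic_on {w. \<bar>Im w\<bar> < pi/2}"
proof -
  have "exp w + 1 \<noteq> 0" if "\<bar>Im w\<bar> < pi/2" for w
    using ell_strip_to_disk[OF that] by (auto simp: strip_to_disk_def ell_inv_def ell_def)
  then show ?thesis
    unfolding strip_to_disk_def[abs_def] ell_inv_def by (intro holomorphic_intros) auto
qed

lemma
  assumes "z \<in> unit_disk"
  shows strip_to_disk_ln_ell: "strip_to_disk (ln (ell z)) = z"
    and abs_Im_ln_ell_less: "\<bar>Im (ln (ell z))\<bar> < pi/2"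
proof -
  have "0 < Re (ell z)" using Re_ell_pos[OF assms] .
  then show "\<bar>Im (ln (ell z))\<bar> < pi/2" by (rule Re_Ln_pos_lt_imp)
  have "ell z \<noteq> 0" "z \<noteq> 1" using \<open>0 < Re (ell z)\<close> assms by (auto simp: unit_disk_def)
  then show "strip_to_disk (ln (ell z)) = z"
    by (simp add: strip_to_disk_def ell_inv_ell)
qed

lemma caratheodory_class_subordinate_ell:
  assumes f: "f \<in> caratheodory_class" and z: "z \<in> unit_disk"
  obtains v where "f z = ell v" "cmod v \<le> cmod z"
proof -
  have fh: "f holomorphic_on ball 0 1" and fre: "\<And>u. cmod u < 1 \<Longrightarrow> 0 < Re (f u)" and "f 0 = 1"
    using f by (auto simp: caratheodory_class_def unit_disk_def)
  have fne: "f u \<noteq> -1" if "cmod u < 1" for u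
    using fre[OF that] by auto
  then have "(\<lambda>u. ell_inv (f u)) holomorphic_on ball 0 1"
    unfolding ell_inv_def using fh by (intro holomorphic_intros) (auto simp: eq_neg_iff_add_eq_0)
  moreover have "ell_inv (f 0) = 0" using \<open>f 0 = 1\<close> by (simp add: ell_inv_def)
  ultimately have "cmod (ell_inv (f z)) \<le> cmod z"
    using Schwarz_Lemma(1)[of "\<lambda>u. ell_inv (f u)"] fre norm_ell_inv_less_one z
    by (auto simp: unit_disk_def)
  moreover have "f z = ell (ell_inv (f z))"
    using fne z by (simp add: unit_disk_def ell_ell_inv)
  ultimately show ?thesis using that by blast
qed

lemma Re_exp_mult_ell_pos_iff:
  assumes "v \<noteq> 1"
  shows "0 < Re (exp (complex_of_real \<alpha> * w) * ell v) \<longleftrightarrow>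
         0 < (1 - (cmod v)\<^sup>2) * cos (\<alpha> * Im w) - 2 * Im v * sin (\<alpha> * Im w)"
proof -
  have "Re (exp (complex_of_real \<alpha> * w) * ell v) = exp (\<alpha> * Re w) *
      ((1 - (cmod v)\<^sup>2) * cos (\<alpha> * Im w) - 2 * Im v * sin (\<alpha> * Im w)) / (cmod (1 - v))\<^sup>2"
    unfolding Re_mult_ell[OF assms] by (simp add: Re_exp Im_exp algebra_simps)
  moreover have "0 < (cmod (1 - v))\<^sup>2" using assms by simp
  ultimately show ?thesis by (simp add: zero_less_divide_iff zero_less_mult_iff)
qed

definition lens_margin :: "real \<Rightarrow> real \<Rightarrow> real \<Rightarrow> real" where
  "lens_margin \<alpha> s y = (1 - s\<^sup>2) * cos (\<alpha> * y) - 2 * s * \<bar>sin (\<alpha> * y)\<bar>"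

lemma lens_margin_abs: "lens_margin \<alpha> s \<bar>y\<bar> = lens_margin \<alpha> s y"
  by (cases "0 \<le> y") (simp_all add: lens_margin_def)

lemma lens_margin_antimono:
  assumes "0 \<le> s" "s \<le> t" "0 \<le> cos (\<alpha> * y)"
  shows "lens_margin \<alpha> t y \<le> lens_margin \<alpha> s y"
proof -
  have "(1 - t\<^sup>2) * cos (\<alpha> * y) \<le> (1 - s\<^sup>2) * cos (\<alpha> * y)"
    using assms by (intro mult_right_mono) (auto intro: power_mono)
  moreover have "2 * s * \<bar>sin (\<alpha> * y)\<bar> \<le> 2 * t * \<bar>sin (\<alpha> * y)\<bar>"
    using assms by (intro mult_right_mono) auto
  ultimately show ?thesis by (simp add: lens_margin_def)
qed

text \<open>The margin at the edge \<open>y = \<pi>/2\<close> of the strip is the smallest one, since there \<open>cos (\<alpha> y)\<close>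
  is smallest and \<open>\<bar>sin (\<alpha> y)\<bar>\<close> largest.\<close>
lemma lens_margin_pos_inside_strip:
  assumes \<alpha>: "0 < \<alpha>" "\<alpha> < 1" and y: "\<bar>y\<bar> < pi/2" and r: "0 \<le> r" "r < 1"
    and critical: "lens_margin \<alpha> r (pi/2) = 0"
  shows "0 < lens_margin \<alpha> r y"
proof -
  have ay: "\<bar>\<alpha> * \<bar>y\<bar>\<bar> < \<alpha> * pi / 2" using \<alpha> y by (simp add: abs_mult)
  have ap: "\<alpha> * pi / 2 < pi / 2" using \<alpha> by simp
  have "cos (\<alpha> * \<bar>y\<bar>) > cos (\<alpha> * pi / 2)"
    using cos_monotone_0_pi[of "\<alpha> * \<bar>y\<bar>" "\<alpha> * pi / 2"] ay ap \<alpha> by simp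
  moreover have "1 - r\<^sup>2 > 0" using r by (simp add: abs_square_less_1)
  ultimately have c: "(1 - r\<^sup>2) * cos (\<alpha> * pi / 2) < (1 - r\<^sup>2) * cos (\<alpha> * \<bar>y\<bar>)" by simp
  have "0 \<le> \<alpha> * \<bar>y\<bar>" "\<alpha> * \<bar>y\<bar> \<le> \<alpha> * pi / 2" using ay \<alpha> by auto
  then have "sin (\<alpha> * \<bar>y\<bar>) \<le> sin (\<alpha> * pi / 2)" "0 \<le> sin (\<alpha> * \<bar>y\<bar>)"
    using sin_monotone_2pi_le[of "\<alpha> * \<bar>y\<bar>" "\<alpha> * pi / 2"] sin_ge_zero[of "\<alpha> * \<bar>y\<bar>"] ap
    by auto
  then have "2 * r * \<bar>sin (\<alpha> * \<bar>y\<bar>)\<bar> \<le> 2 * r * \<bar>sin (\<alpha> * pi / 2)\<bar>"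
    using r by (intro mult_left_mono) auto
  with c critical have "0 < lens_margin \<alpha> r \<bar>y\<bar>"
    by (simp add: lens_margin_def)
  then show ?thesis by (simp only: lens_margin_abs)
qed

lemma lens_margin_neg_beyond_critical:
  assumes \<alpha>: "0 < \<alpha>" "\<alpha> < 1" and r: "0 < r" "r < r1"
    and critical: "lens_margin \<alpha> r (pi/2) = 0"
  shows "lens_margin \<alpha> r1 (pi/2) < 0"
proof -
  define c s where "c = cos (\<alpha> * pi / 2)" and "s = sin (\<alpha> * pi / 2)"
  have "0 < \<alpha> * pi" "\<alpha> * pi < pi" using \<alpha> by simp_all
  then have "0 < c" unfolding c_def by (intro cos_gt_zero_pi) linarith+
  have "0 \<le> s" using \<alpha> by (simp add: s_def sin_ge_zero)
  then have crit: "(1 - r\<^sup>2) * c = 2 * r * s" using critical by (simp add: lens_margin_def c_def s_def)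
  have "r * ((1 - r1\<^sup>2) * c - 2 * r1 * s) = r * (1 - r1\<^sup>2) * c - r1 * (2 * r * s)"
    by (simp add: algebra_simps)
  also have "\<dots> = c * (r - r1) * (1 + r * r1)"
    unfolding crit[symmetric] by (simp add: power2_eq_square algebra_simps)
  also have "\<dots> < 0" using r \<open>0 < c\<close>
    by (intro mult_neg_pos mult_pos_neg) (auto intro: add_pos_pos)
  finally show ?thesis using r \<open>0 \<le> s\<close> by (simp add: lens_margin_def c_def s_def mult_less_0_iff)
qed

lemma Re_exp_mult_ell_pos:
  assumes \<alpha>: "0 < \<alpha>" "\<alpha> < 1" and w: "\<bar>Im w\<bar> < pi/2" and r: "0 \<le> r" "r < 1"
    and critical: "lens_margin \<alpha> r (pi/2) = 0" and v: "cmod v \<le> r"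
  shows "0 < Re (exp (complex_of_real \<alpha> * w) * ell v)"
proof -
  have "\<bar>\<alpha> * Im w\<bar> < pi/2" using \<alpha> w mult_left_le_one_le[of "\<bar>Im w\<bar>" \<alpha>] by (simp add: abs_mult)
  then have "0 \<le> cos (\<alpha> * Im w)" by (intro cos_ge_zero) auto
  then have "0 < lens_margin \<alpha> (cmod v) (Im w)"
    using lens_margin_antimono[of "cmod v" r] lens_margin_pos_inside_strip[OF \<alpha> w r critical] v
    by fastforce
  also have "lens_margin \<alpha> (cmod v) (Im w) \<le> (1 - (cmod v)\<^sup>2) * cos (\<alpha> * Im w) - 2 * Im v * sin (\<alpha> * Im w)"
    using abs_Im_le_cmod[of v] abs_ge_self[of "Im v * sin (\<alpha> * Im w)"]
      mult_right_mono[of "\<bar>Im v\<bar>" "cmod v" "\<bar>sin (\<alpha> * Im w)\<bar>"]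
    by (auto simp: lens_margin_def abs_mult)
  moreover have "v \<noteq> 1" using v r by auto
  ultimately show ?thesis using Re_exp_mult_ell_pos_iff by simp
qed

lemma norm_exp_damping:
  "norm (exp (- complex_of_real \<epsilon> * (exp w + exp (- w)))) = exp (- \<epsilon> * Re (exp w + exp (- w)))"
  by (simp add: norm_exp_eq_Re)

lemma Re_exp_plus_exp_minus: "Re (exp w + exp (- w)) = cos (Im w) * (exp (Re w) + exp (- Re w))"
  by (simp add: Re_exp algebra_simps)

text \<open>The damping factor \<open>exp (-\<epsilon> (e\<^sup>w + e\<^sup>-\<^sup>w))\<close> decays like \<open>exp (-\<epsilon> cos \<beta> e\<^bsup>|Re w|\<^esup>)\<close>
  on the strip, which beats any bound on \<open>h\<close> on the vertical sides of a long enough rectangle.\<close>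
lemma Phragmen_Lindelof_strip_damped:
  fixes h :: "complex \<Rightarrow> complex"
  assumes \<beta>: "0 < \<beta>" "\<beta> < pi/2" and holo: "h holomorphic_on {w. \<bar>Im w\<bar> \<le> \<beta>}"
    and M: "\<And>w. \<bar>Im w\<bar> \<le> \<beta> \<Longrightarrow> norm (h w) \<le> M"
    and B: "\<And>w. \<bar>Im w\<bar> = \<beta> \<Longrightarrow> norm (h w) \<le> B" "0 < B"
    and \<epsilon>: "0 < \<epsilon>" and w0: "\<bar>Im w0\<bar> < \<beta>"
  shows "norm (h w0) * exp (- \<epsilon> * Re (exp w0 + exp (- w0))) \<le> B"
proof -
  define S where "S = {w. \<bar>Im w\<bar> \<le> \<beta>}"
  define g where "g w = h w * exp (- complex_of_real \<epsilon> * (exp w + exp (- w)))" for w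
  have norm_g: "norm (g w) = norm (h w) * exp (- \<epsilon> * Re (exp w + exp (- w)))" for w
    by (simp add: g_def norm_mult norm_exp_damping)
  define c where "c = cos \<beta>"
  have "0 < c" using \<beta> by (simp add: c_def cos_gt_zero_pi)
  have Re_ge: "c * exp \<bar>Re w\<bar> \<le> Re (exp w + exp (- w))" if "\<bar>Im w\<bar> \<le> \<beta>" for w
  proof -
    have "c \<le> cos (Im w)"
      using cos_monotone_0_pi_le[of "\<bar>Im w\<bar>" \<beta>] that \<beta> by (simp add: c_def)
    moreover have "exp \<bar>Re w\<bar> \<le> exp (Re w) + exp (- Re w)"
      by (cases "0 \<le> Re w") (simp_all add: add_increasing add_increasing2)
    ultimately show ?thesis
      unfolding Re_exp_plus_exp_minus using \<open>0 < c\<close> by (intro mult_mono) auto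
  qed
  have "((\<lambda>X. M * exp (- \<epsilon> * c * exp X)) \<longlongrightarrow> 0) at_top"
    using \<epsilon> \<open>0 < c\<close> by real_asymp
  then have "eventually (\<lambda>X. M * exp (- \<epsilon> * c * exp X) < B \<and> \<bar>Re w0\<bar> < X) at_top"
    using B(2) by (intro eventually_conj order_tendstoD(2) eventually_gt_at_top) auto
  then obtain X where X: "M * exp (- \<epsilon> * c * exp X) < B" "\<bar>Re w0\<bar> < X"
    by (auto dest: eventually_happens)
  define a b where "a = Complex (- X) (- \<beta>)" and "b = Complex X \<beta>"
  have "w0 \<in> box a b" using X w0 by (auto simp: a_def b_def box_complex_eq)
  then have "box a b \<noteq> {}" by auto
  have "cbox a b \<subseteq> S" using \<beta> by (auto simp: a_def b_def cbox_complex_eq S_def)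
  have frontier_bound: "norm (g w) \<le> B" if w: "w \<in> frontier (box a b)" for w
  proof -
    have "w \<in> cbox a b" "w \<notin> box a b"
      using w \<open>box a b \<noteq> {}\<close> by (auto simp: frontier_def closure_box interior_open[OF open_box])
    then have in_S: "\<bar>Im w\<bar> \<le> \<beta>" and side: "\<bar>Re w\<bar> = X \<or> \<bar>Im w\<bar> = \<beta>"
      by (auto simp: a_def b_def cbox_complex_eq box_complex_eq)
    have "0 \<le> Re (exp w + exp (- w))"
      using Re_ge[OF in_S] \<open>0 < c\<close> by (meson exp_ge_zero mult_nonneg_nonneg less_imp_le order_trans)
    then have damp_le_1: "exp (- \<epsilon> * Re (exp w + exp (- w))) \<le> 1"
      using \<epsilon> by (simp del: plus_complex.sel)
    from side show ?thesis
    proof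
      assume "\<bar>Re w\<bar> = X"
      then have "exp (- \<epsilon> * Re (exp w + exp (- w))) \<le> exp (- \<epsilon> * c * exp X)"
        using Re_ge[OF in_S] \<epsilon> by simp
      then have "norm (g w) \<le> M * exp (- \<epsilon> * c * exp X)"
        unfolding norm_g using M[OF in_S] by (intro mult_mono) (auto intro: order_trans[OF norm_ge_zero])
      with X show ?thesis by simp
    next
      assume "\<bar>Im w\<bar> = \<beta>"
      have "norm (g w) \<le> norm (h w)"
        unfolding norm_g using damp_le_1 by (simp add: mult_left_le)
      also have "\<dots> \<le> B" using B(1) \<open>\<bar>Im w\<bar> = \<beta>\<close> .
      finally show ?thesis .
    qed
  qed
  have "g holomorphic_on S"
    using holo unfolding g_def S_def by (intro holomorphic_intros)
  then have "g holomorphic_on cbox a b"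
    using \<open>cbox a b \<subseteq> S\<close> by (rule holomorphic_on_subset)
  then have g_box: "g holomorphic_on interior (box a b)" "continuous_on (closure (box a b)) g"
    unfolding interior_open[OF open_box] closure_box[OF \<open>box a b \<noteq> {}\<close>]
    using box_subset_cbox holomorphic_on_subset holomorphic_on_imp_continuous_on by blast+
  have "norm (g w0) \<le> B"
    using maximum_modulus_frontier[OF g_box bounded_box frontier_bound \<open>w0 \<in> box a b\<close>] .
  then show ?thesis by (simp add: norm_g)
qed

lemma Phragmen_Lindelof_strip:
  fixes h :: "complex \<Rightarrow> complex"
  assumes "0 < \<beta>" "\<beta> < pi/2" "h holomorphic_on {w. \<bar>Im w\<bar> \<le> \<beta>}"
    and "\<And>w. \<bar>Im w\<bar> \<le> \<beta> \<Longrightarrow> norm (h w) \<le> M"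
    and "\<And>w. \<bar>Im w\<bar> = \<beta> \<Longrightarrow> norm (h w) \<le> B" "0 < B"
    and "\<bar>Im w0\<bar> < \<beta>"
  shows "norm (h w0) \<le> B"
proof -
  define D where "D = Re (exp w0 + exp (- w0))"
  have bound: "norm (h w0) \<le> B * exp (\<epsilon> * D)" if "0 < \<epsilon>" for \<epsilon>
  proof -
    have "norm (h w0) * exp (- \<epsilon> * D) \<le> B"
      unfolding D_def by (rule Phragmen_Lindelof_strip_damped[OF assms(1-6) that assms(7)])
    then show ?thesis by (simp add: exp_minus field_simps)
  qed
  have "eventually (\<lambda>\<epsilon>. norm (h w0) \<le> B * exp (\<epsilon> * D)) (at_right 0)"
    using eventually_at_right_less[of 0] by (rule eventually_mono) (rule bound)
  moreover have "((\<lambda>\<epsilon>. B * exp (\<epsilon> * D)) \<longlongrightarrow> B * exp (0 * D)) (at_right 0)"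
    by (intro tendsto_intros)
  ultimately show ?thesis by (auto intro: tendsto_lowerbound)
qed

lemma sup_norm_le_iff:
  assumes "schwarz_type \<phi>"
  shows "sup_norm \<phi> \<le> r \<longleftrightarrow> (\<forall>z\<in>unit_disk. cmod (\<phi> z) \<le> r)"
proof -
  have "bdd_above ((\<lambda>z. cmod (\<phi> z)) ` unit_disk)"
    using assms by (intro bdd_aboveI[of _ 1]) (auto simp: schwarz_type_def unit_disk_def)
  moreover have "unit_disk \<noteq> {}" by (auto simp: unit_disk_def)
  ultimately show ?thesis unfolding sup_norm_def by (simp add: cSUP_le_iff)
qed

lemma wcomp_lens_weight_in_caratheodory_class:
  assumes \<alpha>: "0 < \<alpha>" "\<alpha> < 1" and \<phi>: "schwarz_type \<phi>" and r: "0 \<le> r" "r < 1"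
    and critical: "lens_margin \<alpha> r (pi/2) = 0" and bound: "\<forall>z\<in>unit_disk. cmod (\<phi> z) \<le> r"
    and f: "f \<in> caratheodory_class"
  shows "wcomp (ell \<circ> lens_map \<alpha>) \<phi> f \<in> caratheodory_class"
proof -
  have fh: "f holomorphic_on unit_disk" and "f 0 = 1"
    using f by (auto simp: caratheodory_class_def)
  have \<phi>h: "\<phi> holomorphic_on unit_disk" and \<phi>D: "\<phi> ` unit_disk \<subseteq> unit_disk" and "\<phi> 0 = 0"
    using \<phi> by (auto simp: schwarz_type_def)
  have eq: "wcomp (ell \<circ> lens_map \<alpha>) \<phi> f z = ell z powr complex_of_real \<alpha> * f (\<phi> z)"
    if "z \<in> unit_disk" for z
    using that \<alpha> by (simp add: wcomp_def ell_lens_map)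
  have "(\<lambda>z. ell z powr complex_of_real \<alpha> * f (\<phi> z)) holomorphic_on unit_disk"
    using holomorphic_on_compose_gen[OF \<phi>h fh \<phi>D] holomorphic_ell_powr
    by (intro holomorphic_on_mult) (auto simp: o_def)
  then have "wcomp (ell \<circ> lens_map \<alpha>) \<phi> f holomorphic_on unit_disk"
    using eq by (subst holomorphic_cong[OF refl]) auto
  moreover have "wcomp (ell \<circ> lens_map \<alpha>) \<phi> f 0 = 1"
    using \<open>f 0 = 1\<close> \<open>\<phi> 0 = 0\<close> by (simp add: wcomp_def lens_map_def ell_def)
  moreover have "0 < Re (wcomp (ell \<circ> lens_map \<alpha>) \<phi> f z)" if z: "z \<in> unit_disk" for z
  proof -
    obtain v where v: "f (\<phi> z) = ell v" "cmod v \<le> cmod (\<phi> z)"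
      using caratheodory_class_subordinate_ell[OF f] \<phi>D z by blast
    have "ell z \<noteq> 0" using Re_ell_pos[OF z] by auto
    then have "ell z powr complex_of_real \<alpha> = exp (complex_of_real \<alpha> * ln (ell z))"
      by (simp add: powr_def)
    moreover have "cmod v \<le> r" using v(2) bound z by fastforce
    ultimately show ?thesis
      using Re_exp_mult_ell_pos[OF \<alpha> abs_Im_ln_ell_less[OF z] r critical] eq[OF z] v(1) by simp
  qed
  ultimately show ?thesis by (auto simp: caratheodory_class_def)
qed

lemma rotated_ell_in_caratheodory_class:
  assumes "cmod e = 1"
  shows "(\<lambda>u. ell (e * u)) \<in> caratheodory_class"
proof -
  have eD: "e * u \<in> unit_disk" if "u \<in> unit_disk" for u
    using that assms by (simp add: unit_disk_def norm_mult)
  then have "e * u \<noteq> 1" if "u \<in> unit_disk" for u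
    using that by (force simp: unit_disk_def)
  then have "(\<lambda>u. ell (e * u)) holomorphic_on unit_disk"
    unfolding ell_def by (intro holomorphic_intros) auto
  then show ?thesis using Re_ell_pos[OF eD] by (simp add: caratheodory_class_def ell_def)
qed

lemma Re_ell_powr_mult_ell_pos_if_wcomp:
  assumes \<alpha>: "0 \<le> \<alpha>" "\<alpha> \<le> 1"
    and H: "\<forall>f\<in>caratheodory_class. wcomp (ell \<circ> lens_map \<alpha>) \<phi> f \<in> caratheodory_class"
    and z: "z \<in> unit_disk" and v: "cmod v = cmod (\<phi> z)"
  shows "0 < Re (ell z powr complex_of_real \<alpha> * ell v)"
proof -
  define e where "e = (if \<phi> z = 0 then 1 else v / \<phi> z)"
  have "cmod e = 1" "e * \<phi> z = v" using v by (auto simp: e_def norm_divide)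
  then have "wcomp (ell \<circ> lens_map \<alpha>) \<phi> (\<lambda>u. ell (e * u)) \<in> caratheodory_class"
    using H rotated_ell_in_caratheodory_class by blast
  then have "0 < Re (wcomp (ell \<circ> lens_map \<alpha>) \<phi> (\<lambda>u. ell (e * u)) z)"
    using z by (auto simp: caratheodory_class_def)
  then show ?thesis using \<open>e * \<phi> z = v\<close> z \<alpha> by (simp add: wcomp_def ell_lens_map)
qed

lemma lens_margin_pos_if_wcomp:
  assumes \<alpha>: "0 \<le> \<alpha>" "\<alpha> \<le> 1"
    and H: "\<forall>f\<in>caratheodory_class. wcomp (ell \<circ> lens_map \<alpha>) \<phi> f \<in> caratheodory_class"
    and w: "\<bar>Im w\<bar> < pi/2"
  shows "0 < lens_margin \<alpha> (cmod (\<phi> (strip_to_disk w))) (Im w)"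
proof -
  define s where "s = cmod (\<phi> (strip_to_disk w))"
  define \<sigma> :: real where "\<sigma> = (if 0 \<le> sin (\<alpha> * Im w) then 1 else -1)"
  define v where "v = \<i> * complex_of_real (\<sigma> * s)"
  have "cmod v = s" "v \<noteq> 1" by (auto simp: v_def \<sigma>_def s_def norm_mult complex_eq_iff)
  have "ln (exp w) = w" using w by (intro Ln_exp) auto
  then have "ell (strip_to_disk w) powr complex_of_real \<alpha> = exp (complex_of_real \<alpha> * w)"
    by (simp add: ell_strip_to_disk[OF w] powr_def)
  then have "0 < Re (exp (complex_of_real \<alpha> * w) * ell v)"
    using Re_ell_powr_mult_ell_pos_if_wcomp[OF \<alpha> H strip_to_disk_in_unit_disk[OF w]] \<open>cmod v = s\<close>
    by (simp add: s_def)
  then have "0 < (1 - s\<^sup>2) * cos (\<alpha> * Im w) - 2 * (\<sigma> * s) * sin (\<alpha> * Im w)"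
    using Re_exp_mult_ell_pos_iff[OF \<open>v \<noteq> 1\<close>] \<open>cmod v = s\<close> by (simp add: v_def)
  then show ?thesis by (simp add: lens_margin_def s_def \<sigma>_def abs_if split: if_splits)
qed

lemma norm_less_on_line_if_wcomp:
  assumes \<alpha>: "0 < \<alpha>" "\<alpha> < 1"
    and H: "\<forall>f\<in>caratheodory_class. wcomp (ell \<circ> lens_map \<alpha>) \<phi> f \<in> caratheodory_class"
    and \<beta>: "\<beta> < pi/2" and r1: "0 \<le> r1" "lens_margin \<alpha> r1 \<beta> < 0" and w: "\<bar>Im w\<bar> = \<beta>"
  shows "cmod (\<phi> (strip_to_disk w)) < r1"
proof (rule ccontr)
  define s where "s = cmod (\<phi> (strip_to_disk w))"
  assume "\<not> cmod (\<phi> (strip_to_disk w)) < r1"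
  then have "r1 \<le> s" by (simp add: s_def)
  have "0 \<le> \<alpha> * \<beta>" "\<alpha> * \<beta> \<le> \<beta>"
    using w \<alpha> mult_left_le_one_le[of \<beta> \<alpha>] by auto
  then have "0 \<le> cos (\<alpha> * \<beta>)" using \<beta> by (intro cos_ge_zero) linarith+
  have "0 < lens_margin \<alpha> s (Im w)"
    using lens_margin_pos_if_wcomp[OF _ _ H] \<alpha> \<beta> w by (simp add: s_def)
  also have "lens_margin \<alpha> s (Im w) = lens_margin \<alpha> s \<beta>"
    using lens_margin_abs[of \<alpha> s "Im w"] w by simp
  also have "\<dots> \<le> lens_margin \<alpha> r1 \<beta>"
    using lens_margin_antimono[OF r1(1) \<open>r1 \<le> s\<close> \<open>0 \<le> cos (\<alpha> * \<beta>)\<close>] .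
  finally show False using r1(2) by simp
qed

lemma norm_le_critical_if_wcomp:
  assumes \<alpha>: "0 < \<alpha>" "\<alpha> < 1" and \<phi>: "schwarz_type \<phi>"
    and H: "\<forall>f\<in>caratheodory_class. wcomp (ell \<circ> lens_map \<alpha>) \<phi> f \<in> caratheodory_class"
    and r: "0 < r" and critical: "lens_margin \<alpha> r (pi/2) = 0" and z: "z \<in> unit_disk"
  shows "cmod (\<phi> z) \<le> r"
proof (rule ccontr)
  assume "\<not> cmod (\<phi> z) \<le> r"
  define r1 where "r1 = (r + cmod (\<phi> z)) / 2"
  have r1: "r < r1" "r1 < cmod (\<phi> z)" "0 < r1"
    using \<open>\<not> cmod (\<phi> z) \<le> r\<close> r by (simp_all add: r1_def)
  define w0 where "w0 = ln (ell z)"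
  have w0: "\<bar>Im w0\<bar> < pi/2" "strip_to_disk w0 = z"
    using abs_Im_ln_ell_less[OF z] strip_to_disk_ln_ell[OF z] by (simp_all add: w0_def)
  have "lens_margin \<alpha> r1 (pi/2) < 0"
    using lens_margin_neg_beyond_critical[OF \<alpha> r r1(1) critical] .
  moreover have "(lens_margin \<alpha> r1 \<longlongrightarrow> lens_margin \<alpha> r1 (pi/2)) (at_left (pi/2))"
    unfolding lens_margin_def by (intro tendsto_intros)
  ultimately have "eventually (\<lambda>\<beta>. lens_margin \<alpha> r1 \<beta> < 0) (at_left (pi/2))"
    by (simp add: order_tendstoD(2))
  moreover have "eventually (\<lambda>\<beta>. \<beta> \<in> {\<bar>Im w0\<bar><..<pi/2}) (at_left (pi/2))"
    using w0(1) by (rule eventually_at_left_real)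
  ultimately have "\<exists>\<beta>. lens_margin \<alpha> r1 \<beta> < 0 \<and> \<beta> \<in> {\<bar>Im w0\<bar><..<pi/2}"
    by (rule eventually_happens'[OF trivial_limit_at_left_real eventually_conj])
  then obtain \<beta> where \<beta>: "lens_margin \<alpha> r1 \<beta> < 0" "\<bar>Im w0\<bar> < \<beta>" "\<beta> < pi/2"
    by auto
  have "strip_to_disk ` {w. \<bar>Im w\<bar> \<le> \<beta>} \<subseteq> unit_disk"
    using \<beta>(3) strip_to_disk_in_unit_disk by fastforce
  moreover have "strip_to_disk holomorphic_on {w. \<bar>Im w\<bar> \<le> \<beta>}"
    using \<beta>(3) by (auto intro: holomorphic_on_subset[OF strip_to_disk_holomorphic])
  ultimately have holo: "(\<phi> \<circ> strip_to_disk) holomorphic_on {w. \<bar>Im w\<bar> \<le> \<beta>}"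
    using \<phi> holomorphic_on_compose_gen by (auto simp: schwarz_type_def)
  have bounded: "norm ((\<phi> \<circ> strip_to_disk) w) \<le> 1" if "\<bar>Im w\<bar> \<le> \<beta>" for w
    using \<phi> strip_to_disk_in_unit_disk[of w] that \<beta>(3) by (force simp: schwarz_type_def unit_disk_def)
  have on_lines: "norm ((\<phi> \<circ> strip_to_disk) w) \<le> r1" if "\<bar>Im w\<bar> = \<beta>" for w
    using norm_less_on_line_if_wcomp[OF \<alpha> H \<beta>(3) _ \<beta>(1) that] r1(3) by simp
  have "0 < \<beta>" using \<beta>(2) by linarith
  then have "norm ((\<phi> \<circ> strip_to_disk) w0) \<le> r1"
    using Phragmen_Lindelof_strip[OF _ \<beta>(3) holo bounded on_lines r1(3) \<beta>(2)] by blast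
  then show False using r1(2) w0(2) by simp
qed

lemma cos_eq_if_sin_eq_half_angle:
  fixes R \<theta> :: real
  assumes "\<bar>R\<bar> \<le> 1" "2 * R / (1 + R\<^sup>2) = sin \<theta>" "0 \<le> cos \<theta>"
  shows "cos \<theta> = (1 - R\<^sup>2) / (1 + R\<^sup>2)"
proof (rule power2_eq_imp_eq)
  have "1 + R\<^sup>2 \<noteq> 0" using zero_le_power2[of R] by linarith
  have "(cos \<theta>)\<^sup>2 = 1 - (2 * R / (1 + R\<^sup>2))\<^sup>2"
    by (simp add: cos_squared_eq assms(2))
  also have "\<dots> = ((1 + R\<^sup>2)\<^sup>2 - (2 * R)\<^sup>2) / (1 + R\<^sup>2)\<^sup>2"
    using \<open>1 + R\<^sup>2 \<noteq> 0\<close> by (simp add: power_divide diff_divide_distrib)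
  also have "(1 + R\<^sup>2)\<^sup>2 - (2 * R)\<^sup>2 = (1 - R\<^sup>2)\<^sup>2"
    by (simp add: power2_eq_square algebra_simps)
  finally show "(cos \<theta>)\<^sup>2 = ((1 - R\<^sup>2) / (1 + R\<^sup>2))\<^sup>2"
    by (simp add: power_divide)
  show "0 \<le> (1 - R\<^sup>2) / (1 + R\<^sup>2)"
    using assms(1) by (simp add: abs_square_le_1)
qed (use assms in simp)

lemma critical_radius_identity:
  fixes R :: real
  assumes "0 \<le> R"
  defines "r \<equiv> (1 - R) / (1 + R)"
  shows "(1 - r\<^sup>2) * ((1 - R\<^sup>2) / (1 + R\<^sup>2)) = 2 * r * (2 * R / (1 + R\<^sup>2))"
proof -
  have "1 + R \<noteq> 0" "1 + R\<^sup>2 \<noteq> 0" using assms(1) zero_le_power2[of R] by linarith+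
  have "1 - r\<^sup>2 = ((1 + R)\<^sup>2 - (1 - R)\<^sup>2) / (1 + R)\<^sup>2"
    using \<open>1 + R \<noteq> 0\<close> unfolding r_def power_divide by (simp add: diff_divide_distrib)
  also have "(1 + R)\<^sup>2 - (1 - R)\<^sup>2 = 4 * R"
    by (simp add: power2_eq_square algebra_simps)
  finally have "1 - r\<^sup>2 = 4 * R / (1 + R)\<^sup>2" .
  then show ?thesis
    using \<open>1 + R \<noteq> 0\<close> \<open>1 + R\<^sup>2 \<noteq> 0\<close> unfolding r_def
    by (simp add: divide_simps) (simp add: algebra_simps power2_eq_square)
qed

lemma lens_margin_critical_radius:
  fixes \<alpha> R :: real
  assumes \<alpha>: "0 < \<alpha>" "\<alpha> < 1" and R: "0 \<le> R" "R < 1" "2 * R / (1 + R\<^sup>2) = sin (\<alpha> * pi / 2)"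
  shows "lens_margin \<alpha> ((1 - R) / (1 + R)) (pi/2) = 0"
proof -
  have "0 < \<alpha> * pi" "\<alpha> * pi < pi" using \<alpha> by simp_all
  then have "0 \<le> cos (\<alpha> * pi / 2)" "0 \<le> sin (\<alpha> * pi / 2)"
    by (intro cos_ge_zero sin_ge_zero; linarith)+
  then have "cos (\<alpha> * pi / 2) = (1 - R\<^sup>2) / (1 + R\<^sup>2)"
    using R by (intro cos_eq_if_sin_eq_half_angle) auto
  then show ?thesis
    using critical_radius_identity[OF R(1)] \<open>0 \<le> sin (\<alpha> * pi / 2)\<close>
    by (simp add: lens_margin_def R(3))
qed

theorem proposition3p7:
  fixes \<alpha> R :: real and \<phi> :: "complex \<Rightarrow> complex"
  assumes "0 < \<alpha>" "\<alpha> < 1"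
    and "schwarz_type \<phi>"
    and "0 \<le> R" "R < 1" "2 * R / (1 + R\<^sup>2) = sin (\<alpha> * pi / 2)"
  shows "(\<forall>f\<in>caratheodory_class. wcomp (ell \<circ> lens_map \<alpha>) \<phi> f \<in> caratheodory_class)
         \<longleftrightarrow> sup_norm \<phi> \<le> (1 - R) / (1 + R)"
proof -
  define r where "r = (1 - R) / (1 + R)"
  have "0 < sin (\<alpha> * pi / 2)" using assms(1,2) by (intro sin_gt_zero) auto
  then have "0 < R" using assms(4,6) by (cases "R = 0") auto
  then have r: "0 < r" "r < 1" using assms(5) by (simp_all add: r_def field_simps)
  have critical: "lens_margin \<alpha> r (pi/2) = 0"
    unfolding r_def using lens_margin_critical_radius[OF assms(1,2,4-6)] .
  show ?thesis
    unfolding r_def[symmetric] sup_norm_le_iff[OF assms(3)]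
    using wcomp_lens_weight_in_caratheodory_class[OF assms(1-3) _ r(2) critical]
      norm_le_critical_if_wcomp[OF assms(1-3) _ r(1) critical] r(1)
    by auto
qed

end
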